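(* Let $S_j$ be local potentials satisfying (A)–(E), let $\omega\in\mathbb{R}^d\setminus\mathbb{Q}^d$, and let $x$ be a Birkhoff global minimizer with rotation vector $\omega$ such that $\tau_{k,l}x=x$ whenever $\langle\omega,k\rangle+l=0$. Then the recurrent set $\mathcal{M}(x)$ is, in the topology of pointwise convergence, either connected or a Cantor set (closed, perfect and totally disconnected).
   Context: Notation: $\|i\|=\sum_{k=1}^d|i_k|$, $B_j^r=\{k:\|k-j\|\le r\}$, $(\tau_{k,l}x)_i=x_{i+k}+l$. Local potentials $S_j:\mathbb{R}^{\mathbb{Z}^d}\to\mathbb{R}$, $j\in\mathbb{Z}^d$, satisfy: (A) there is $r\in(0,\infty)$ and $C^2$ functions $s_j:\mathbb{R}^{B_j^r}\to\mathbb{R}$ with $S_j(x)=s_j(x|_{B_j^r})$; (B) $S_j(\tau_{k,l}x)=S_{j+k}(x)$; (C) each $S_j$ is bounded below and $S_j(x)\to\infty$ as $|x_k-x_j|\to\infty$ whenever $\|k-j\|=1$; (D) $\partial_{i,k}S_j\le0$ for $i\ne k$, and $\partial_{i,k}S_i<0$ when $\|i-k\|=1$; (E) $|\partial_{i,k}S_j|\le C$ uniformly. Birkhoff: for every $(k,l)$, $\tau_{k,l}x\ge x$ or $\tau_{k,l}x\le x$ (pointwise order). Rotation vector $\omega$: $\lim_n x_{ni}/n=\langle\omega,i\rangle$ for all $i$. For finite $B$: $W_B=\sum_{j\in B}S_j$, $\mathring{B}^{(r)}=\{i\in B:B_i^r\subset B\}$; $x$ is a global minimizer if $W_B(x+y)\ge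 W_B(x)$ for all finite $B$ and all $y$ supported in $\mathring{B}^{(r)}$. $\widetilde{\mathcal{M}}(x)$ is the closure (in the topology of pointwise convergence) of $\{\tau_{k,l}x:(k,l)\in\mathbb{Z}^d\times\mathbb{Z}\}$, and $\mathcal{M}(x)=\{y\in\widetilde{\mathcal{M}}(x): y=\lim_{n\to\infty}\tau_{k_n,l_n}y\text{ pointwise for some sequence }(k_n,l_n)\text{ with }\langle\omega,k_n\rangle+l_n\ne0\}$. *)

theory Defs
  imports "HOL-Analysis.Analysis"
begin

text \<open>The type of configurations carries the product topology (= pointwise convergence).\<close>

type_synonym 'd site = "int ^ 'd"
type_synonym 'd config = "int ^ 'd \<Rightarrow> real"

definition l1norm :: "int ^ 'd::finite \<Rightarrow> int" where
  "l1norm i = (\<Sum>a\<in>UNIV. \<bar>i $ a\<bar>)"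

definition ball_l1 :: "int ^ 'd::finite \<Rightarrow> real \<Rightarrow> (int ^ 'd) set" where
  "ball_l1 j r = {k. real_of_int (l1norm (k - j)) \<le> r}"

definition tau :: "int ^ 'd::finite \<Rightarrow> int \<Rightarrow> 'd config \<Rightarrow> 'd config" where
  "tau k l x = (\<lambda>i. x (i + k) + real_of_int l)"

definition ip :: "real ^ 'd::finite \<Rightarrow> int ^ 'd \<Rightarrow> real" where
  "ip \<omega> k = (\<Sum>a\<in>UNIV. \<omega> $ a * real_of_int (k $ a))"

definition has_pd :: "(('i \<Rightarrow> real) \<Rightarrow> real) \<Rightarrow> 'i \<Rightarrow> ('i \<Rightarrow> real) \<Rightarrow> real \<Rightarrow> bool" where
  "has_pd F i x D \<longleftrightarrow> ((\<lambda>t. F (x(i := x i + t))) has_real_derivative D) (at 0)"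

definition pd :: "(('i \<Rightarrow> real) \<Rightarrow> real) \<Rightarrow> 'i \<Rightarrow> ('i \<Rightarrow> real) \<Rightarrow> real" where
  "pd F i x = deriv (\<lambda>t. F (x(i := x i + t))) 0"

definition local_C2 :: "'i set \<Rightarrow> (('i \<Rightarrow> real) \<Rightarrow> real) \<Rightarrow> bool" where
  "local_C2 B F \<longleftrightarrow> finite B
     \<and> (\<forall>x y. (\<forall>i\<in>B. x i = y i) \<longrightarrow> F x = F y)
     \<and> continuous_on UNIV F
     \<and> (\<forall>i x. \<exists>D. has_pd F i x D)
     \<and> (\<forall>i. continuous_on UNIV (pd F i))
     \<and> (\<forall>i k x. \<exists>D. has_pd (pd F i) k x D)
     \<and> (\<forall>i k. continuous_on UNIV (pd (pd F i) k))"

definition local_potentials :: "real \<Rightarrow> ('d::finite site \<Rightarrow> 'd config \<Rightarrow> real) \<Rightarrow> bool" where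
  "local_potentials r S \<longleftrightarrow>
     0 < r
     \<and> (\<forall>j. local_C2 (ball_l1 j r) (S j))
     \<and> (\<forall>j k l x. S j (tau k l x) = S (j + k) x)
     \<and> (\<forall>j. bdd_below (range (S j)))
     \<and> (\<forall>j k. l1norm (k - j) = 1 \<longrightarrow>
           (\<forall>M. \<exists>R. \<forall>x. \<bar>x k - x j\<bar> \<ge> R \<longrightarrow> S j x \<ge> M))
     \<and> (\<forall>i k j x. i \<noteq> k \<longrightarrow> pd (pd (S j) i) k x \<le> 0)
     \<and> (\<forall>i k x. l1norm (i - k) = 1 \<longrightarrow> pd (pd (S i) i) k x < 0)
     \<and> (\<exists>C. \<forall>i k j x. \<bar>pd (pd (S j) i) k x\<bar> \<le> C)"

definition W :: "('d::finite site \<Rightarrow> 'd config \<Rightarrow> real) \<Rightarrow> 'd site set \<Rightarrow> 'd config \<Rightarrow> real" where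
  "W S B x = (\<Sum>j\<in>B. S j x)"

definition interior_r :: "real \<Rightarrow> 'd::finite site set \<Rightarrow> 'd site set" where
  "interior_r r B = {i\<in>B. ball_l1 i r \<subseteq> B}"

definition global_minimizer :: "real \<Rightarrow> ('d::finite site \<Rightarrow> 'd config \<Rightarrow> real) \<Rightarrow> 'd config \<Rightarrow> bool" where
  "global_minimizer r S x \<longleftrightarrow>
     (\<forall>B y. finite B \<longrightarrow> (\<forall>i. i \<notin> interior_r r B \<longrightarrow> y i = 0) \<longrightarrow>
        W S B (\<lambda>i. x i + y i) \<ge> W S B x)"

definition birkhoff :: "'d::finite config \<Rightarrow> bool" where
  "birkhoff x \<longleftrightarrow> (\<forall>k l. tau k l x \<ge> x \<or> tau k l x \<le> x)"

definition has_rotation_vector :: "'d::finite config \<Rightarrow> real ^ 'd \<Rightarrow> bool" where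
  "has_rotation_vector x \<omega> \<longleftrightarrow>
     (\<forall>i. (\<lambda>n::nat. x (int n *s i) / real n) \<longlonglongrightarrow> ip \<omega> i)"

definition Mtilde :: "'d::finite config \<Rightarrow> 'd config set" where
  "Mtilde x = closure {tau k l x | k l. True}"

definition Mrec :: "real ^ 'd::finite \<Rightarrow> 'd config \<Rightarrow> 'd config set" where
  "Mrec \<omega> x = {y \<in> Mtilde x. \<exists>ks ls. (\<forall>n. ip \<omega> (ks n) + real_of_int (ls n) \<noteq> 0)
                  \<and> (\<lambda>n. tau (ks n) (ls n) y) \<longlonglongrightarrow> y}"

definition perfect_set :: "'a::topological_space set \<Rightarrow> bool" where
  "perfect_set A \<longleftrightarrow> (\<forall>y\<in>A. y islimpt A)"

definition totally_disconnected_set :: "'a::topological_space set \<Rightarrow> bool" where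
  "totally_disconnected_set A \<longleftrightarrow> (\<forall>C\<subseteq>A. connected C \<longrightarrow> (\<exists>a. C \<subseteq> {a}))"

definition cantor_set :: "'a::topological_space set \<Rightarrow> bool" where
  "cantor_set A \<longleftrightarrow> closed A \<and> perfect_set A \<and> totally_disconnected_set A"

end

theory Submission
  imports Defs "HOL-Analysis.Kronecker_Approximation_Theorem"
begin

text \<open>
  Write \<open>phase k l = \<langle>\<omega>,k\<rangle> + l\<close>.  The Birkhoff property and the rotation vector
  force the translates \<open>tau k l x\<close> to be ordered like their phases, and the phases are
  dense in \<open>\<real>\<close> because \<open>\<omega>\<close> is irrational.  Hence one can fill the gaps of the orbit by
  the envelopes \<open>lower t\<close> (supremum of the translates of phase \<open>< t\<close>) and \<open>upper t\<close>
  (infimum over phase \<open>> t\<close>); both are monotone, translation equivariant and one-sided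
  continuous in \<open>t\<close>.  The main structural fact is that the recurrent set equals the set
  of all envelopes, since every other point of the hull is an isolated orbit point.
  If \<open>lower = upper\<close> the recurrent set is a continuous image of \<open>\<real>\<close>, hence connected;
  otherwise the gaps \<open>lower t \<noteq> upper t\<close> are dense and separate any two envelopes, which
  makes the recurrent set closed, perfect and totally disconnected.
\<close>

lemma tendsto_fun_iff:
  fixes f :: "'c \<Rightarrow> 'a \<Rightarrow> 'b::topological_space"
  shows "(f \<longlongrightarrow> l) F \<longleftrightarrow> (\<forall>i. ((\<lambda>c. f c i) \<longlongrightarrow> l i) F)"
  using limitin_componentwise[of "\<lambda>i. euclidean" UNIV f l F]
  by (simp add: euclidean_product_topology)

lemma tendsto_fun_sandwich:
  fixes f g h :: "'c \<Rightarrow> 'a \<Rightarrow> real"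
  assumes "\<And>n. f n \<le> g n" "\<And>n. g n \<le> h n" "(f \<longlongrightarrow> l) F" "(h \<longlongrightarrow> l) F"
  shows "(g \<longlongrightarrow> l) F"
  unfolding tendsto_fun_iff
proof
  fix i
  show "((\<lambda>c. g c i) \<longlongrightarrow> l i) F"
  proof (rule tendsto_sandwich[of "\<lambda>c. f c i" _ _ "\<lambda>c. h c i"])
    show "\<forall>\<^sub>F c in F. f c i \<le> g c i" "\<forall>\<^sub>F c in F. g c i \<le> h c i"
      using assms(1,2) by (simp_all add: le_fun_def)
    show "((\<lambda>c. f c i) \<longlongrightarrow> l i) F" "((\<lambda>c. h c i) \<longlongrightarrow> l i) F"
      using assms(3,4) by (simp_all add: tendsto_fun_iff)
  qed
qed

lemma closed_fun_le: "closed {v :: 'a \<Rightarrow> real. v \<le> a}"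
  unfolding le_fun_def
  by (intro closed_Collect_all closed_Collect_le) (auto intro: continuous_on_const)

lemma closed_fun_ge: "closed {v :: 'a \<Rightarrow> real. a \<le> v}"
  unfolding le_fun_def
  by (intro closed_Collect_all closed_Collect_le) (auto intro: continuous_on_const)

lemma closed_fun_singleton: "closed {a :: 'a \<Rightarrow> real}"
proof -
  have "{a} = {v. v \<le> a} \<inter> {v. a \<le> v}" by (auto intro: order_antisym)
  then show ?thesis by (simp add: closed_Int closed_fun_le closed_fun_ge)
qed

lemma limpt_of_sequence:
  fixes f :: "nat \<Rightarrow> 'a::topological_space"
  assumes "f \<longlonglongrightarrow> y" "\<And>n. f n \<in> S" "\<And>n. f n \<noteq> y"
  shows "y islimpt S"
proof (rule islimptI)
  fix T assume "y \<in> T" "open T"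
  then have "eventually (\<lambda>n. f n \<in> T) sequentially"
    using topological_tendstoD[OF assms(1)] by blast
  then obtain n where "f n \<in> T" by (metis eventually_sequentially order_refl)
  then show "\<exists>y'\<in>S. y' \<in> T \<and> y' \<noteq> y" using assms(2,3) by blast
qed

lemma tau_tau: "tau k l (tau k' l' y) = tau (k + k') (l + l') y"
  by (simp add: tau_def fun_eq_iff algebra_simps)

lemma tau_mono: "y \<le> z \<Longrightarrow> tau k l y \<le> tau k l z"
  by (simp add: tau_def le_fun_def)

lemma tau_inj: "tau k l y = tau k l z \<Longrightarrow> y = z"
  by (simp add: tau_def fun_eq_iff) (metis add_diff_cancel diff_add_cancel)

lemma tau_iterate_le:
  assumes "tau k l y \<le> y" shows "tau (int n *s k) (int n * l) y \<le> y"
proof (induction n)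
  case (Suc n)
  have "tau (int (Suc n) *s k) (int (Suc n) * l) y = tau k l (tau (int n *s k) (int n * l) y)"
    by (simp add: tau_tau vec_eq_iff algebra_simps)
  also have "\<dots> \<le> tau k l y" using Suc.IH by (rule tau_mono)
  finally show ?case using assms by simp
qed (simp add: tau_def)

lemma tau_iterate_eq:
  assumes "tau k l y = y" shows "tau (int n *s k) (int n * l) y = y"
proof (induction n)
  case (Suc n)
  have "tau (int (Suc n) *s k) (int (Suc n) * l) y = tau k l (tau (int n *s k) (int n * l) y)"
    by (simp add: tau_tau vec_eq_iff algebra_simps)
  then show ?case using Suc.IH assms by simp
qed (simp add: tau_def)

lemma ip_add: "ip \<omega> (a + b) = ip \<omega> a + ip \<omega> b"
  by (simp add: ip_def sum.distrib[symmetric] algebra_simps)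

lemma ip_smult: "ip \<omega> (c *s a) = real_of_int c * ip \<omega> a"
  by (simp add: ip_def sum_distrib_left algebra_simps)

lemma ip_zero [simp]: "ip \<omega> 0 = 0"
  by (simp add: ip_def)

lemma ip_minus: "ip \<omega> (- a) = - ip \<omega> a"
  unfolding ip_def by (simp add: sum_negf[symmetric])

lemma ip_axis: "ip \<omega> (axis a c) = \<omega> $ a * real_of_int c"
proof -
  have "ip \<omega> (axis a c) = (\<Sum>b\<in>UNIV. if b = a then \<omega> $ a * real_of_int c else 0)"
    unfolding ip_def by (rule sum.cong) (auto simp: axis_def)
  then show ?thesis by simp
qed

section \<open>The orbit of a Birkhoff configuration with irrational rotation vector\<close>

locale birkhoff_irrational =
  fixes \<omega> :: "real ^ 'd::finite" and x :: "'d config"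
  assumes irrational: "\<exists>a. \<omega> $ a \<notin> \<rat>"
    and birkhoff: "birkhoff x"
    and rotation: "has_rotation_vector x \<omega>"
    and resonant_fixed: "\<forall>k l. ip \<omega> k + real_of_int l = 0 \<longrightarrow> tau k l x = x"
begin

definition phase :: "int ^ 'd \<Rightarrow> int \<Rightarrow> real" where
  "phase k l = ip \<omega> k + real_of_int l"

definition orb :: "int ^ 'd \<Rightarrow> int \<Rightarrow> 'd config" where
  "orb k l = tau k l x"

lemma phase_add: "phase (k + k') (l + l') = phase k l + phase k' l'"
  by (simp add: phase_def ip_add)

lemma phase_minus: "phase (- k) (- l) = - phase k l"
  by (simp add: phase_def ip_minus)

lemma phase_diff: "phase (k - k') (l - l') = phase k l - phase k' l'"
  using phase_add[of k "- k'" l "- l'"] phase_minus[of k' l'] by simp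

lemma phase_smult: "phase (c *s k) (c * l) = real_of_int c * phase k l"
  by (simp add: phase_def ip_smult algebra_simps)

lemma orb_apply: "orb k l i = x (i + k) + real_of_int l"
  by (simp add: orb_def tau_def)

lemma tau_orb: "tau k l (orb k' l') = orb (k + k') (l + l')"
  by (simp add: orb_def tau_tau)

lemma orb_in_Mtilde: "orb k l \<in> Mtilde x"
  unfolding Mtilde_def orb_def by (rule closure_subset[THEN subsetD]) blast

subsection \<open>The orbit is ordered by phase\<close>

text \<open>A translate of positive phase lies above \<open>x\<close>: otherwise, by the Birkhoff property it
  lies below, and iterating shows that the rotation vector gives phase \<open>\<le> 0\<close>.\<close>
lemma x_le_orb_of_pos_phase:
  assumes "phase k l > 0" shows "x \<le> orb k l"
proof (rule ccontr)
  assume "\<not> x \<le> orb k l"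
  then have "tau k l x \<le> x" using birkhoff unfolding birkhoff_def orb_def by blast
  then have "tau (int n *s k) (int n * l) x 0 \<le> x 0" for n
    using tau_iterate_le[of k l x n] by (simp add: le_fun_def)
  then have bound: "x (int n *s k) + real n * real_of_int l \<le> x 0" for n
    by (simp add: tau_def)
  have "(\<lambda>n::nat. x (int n *s k) / real n) \<longlonglongrightarrow> ip \<omega> k"
    using rotation unfolding has_rotation_vector_def by blast
  moreover have "(\<lambda>n::nat. x 0 * inverse (real n) - real_of_int l) \<longlonglongrightarrow> x 0 * 0 - real_of_int l"
    by (intro tendsto_intros tendsto_inverse_0_at_top filterlim_real_sequentially)
  moreover have "eventually (\<lambda>n::nat. x (int n *s k) / real n \<le> x 0 * inverse (real n) - real_of_int l) sequentially"
  proof (rule eventually_sequentiallyI[of 1])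
    fix n :: nat assume "1 \<le> n"
    then show "x (int n *s k) / real n \<le> x 0 * inverse (real n) - real_of_int l"
      using bound[of n] by (simp add: field_simps)
  qed
  ultimately have "ip \<omega> k \<le> - real_of_int l"
    using tendsto_le[of sequentially] by fastforce
  then show False using assms by (simp add: phase_def)
qed

text \<open>Translating this comparison shows that the orbit is ordered by phase.\<close>
lemma orb_mono:
  assumes "phase k l \<le> phase k' l'" shows "orb k l \<le> orb k' l'"
proof -
  have "x \<le> orb (k' - k) (l' - l)"
  proof (cases "phase (k' - k) (l' - l) = 0")
    case True then show ?thesis using resonant_fixed by (simp add: phase_def orb_def)
  next
    case False
    moreover have "phase (k' - k) (l' - l) \<ge> 0"
      using assms phase_add[of k' "- k" l' "- l"] phase_minus[of k l] by simp
    ultimately show ?thesis by (simp add: x_le_orb_of_pos_phase)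
  qed
  then have "tau k l x \<le> tau k l (orb (k' - k) (l' - l))" by (rule tau_mono)
  then show ?thesis by (simp add: orb_def tau_tau)
qed

lemma orb_eq: "phase k l = phase k' l' \<Longrightarrow> orb k l = orb k' l'"
  using orb_mono[of k l k' l'] orb_mono[of k' l' k l] by simp

lemma x_growth: "\<bar>x (i + k) - x i - ip \<omega> k\<bar> \<le> 1"
proof -
  have "orb k \<lfloor>- ip \<omega> k\<rfloor> \<le> orb 0 0"
    by (rule orb_mono) (simp add: phase_def, linarith)
  moreover have "orb 0 0 \<le> orb k \<lceil>- ip \<omega> k\<rceil>"
    by (rule orb_mono) (simp add: phase_def, linarith)
  ultimately have "x (i + k) + \<lfloor>- ip \<omega> k\<rfloor> \<le> x i" "x i \<le> x (i + k) + \<lceil>- ip \<omega> k\<rceil>"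
    by (simp_all add: le_fun_def orb_apply)
  then show ?thesis by linarith
qed

lemma orb_bound: "\<bar>orb k l i - x i - phase k l\<bar> \<le> 1"
  using x_growth[of i k] by (simp add: orb_apply phase_def)

subsection \<open>Density of the phases\<close>

text \<open>Dirichlet's approximation theorem applied to an irrational coordinate of \<open>\<omega>\<close>.\<close>
lemma phase_small_pos:
  assumes "e > 0" shows "\<exists>k l. 0 < phase k l \<and> phase k l < e"
proof -
  obtain a where a: "\<omega> $ a \<notin> \<rat>" using irrational by blast
  obtain N :: nat where N: "1 / real N < e" "N > 0"
    by (metis assms gr_zeroI inverse_eq_divide real_arch_inverse)
  obtain h q where hq: "0 < q" "\<bar>of_int q * \<omega> $ a - of_int h\<bar> < 1 / real N"
    using Dirichlet_approx[OF N(2), of "\<omega> $ a"] by blast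
  define p where "p = phase (axis a q) (- h)"
  have p: "p = of_int q * \<omega> $ a - of_int h" by (simp add: p_def phase_def ip_axis)
  have "p \<noteq> 0"
  proof
    assume "p = 0"
    then have "\<omega> $ a = of_int h / of_int q" using hq(1) p by (simp add: field_simps)
    then show False using a by (simp add: Rats_divide)
  qed
  then consider "p > 0" | "phase (- axis a q) h > 0"
    using phase_minus[of "axis a q" "- h"] p_def by fastforce
  then show ?thesis
  proof cases
    case 1 then show ?thesis using hq N p_def p by (metis abs_of_pos less_trans)
  next
    case 2
    then show ?thesis using hq N p_def p phase_minus[of "axis a q" "- h"]
      by (metis abs_minus_cancel abs_of_pos less_trans minus_minus)
  qed
qed

lemma phase_dense:
  assumes "a < b" shows "\<exists>k l. a < phase k l \<and> phase k l < b"
proof -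
  obtain k l where kl: "0 < phase k l" "phase k l < b - a"
    using phase_small_pos[of "b - a"] assms by auto
  define n where "n = \<lfloor>a / phase k l\<rfloor> + 1"
  have "a / phase k l < real_of_int n" "real_of_int n \<le> a / phase k l + 1"
    unfolding n_def by linarith+
  then have "a < real_of_int n * phase k l" "real_of_int n * phase k l \<le> a + phase k l"
    using kl(1) by (simp_all add: field_simps)
  then show ?thesis using kl(2) by (intro exI[of _ "n *s k"] exI[of _ "n * l"]) (simp add: phase_smult)
qed

lemma phase_seq_below:
  "\<exists>ks ls. (\<forall>n::nat. phase (ks n) (ls n) < t) \<and> (\<lambda>n. phase (ks n) (ls n)) \<longlonglongrightarrow> t"
proof -
  have "\<forall>n::nat. \<exists>kl. t - inverse (real (Suc n)) < phase (fst kl) (snd kl) \<and> phase (fst kl) (snd kl) < t"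
    using phase_dense[of "t - inverse (real (Suc _))" t] by simp
  then obtain kl where kl:
    "\<And>n. t - inverse (real (Suc n)) < phase (fst (kl n)) (snd (kl n))"
    "\<And>n. phase (fst (kl n)) (snd (kl n)) < t"
    by metis
  have "(\<lambda>n. t - inverse (real (Suc n))) \<longlonglongrightarrow> t"
    using tendsto_diff[OF tendsto_const LIMSEQ_inverse_real_of_nat, of t] by simp
  then have "(\<lambda>n. phase (fst (kl n)) (snd (kl n))) \<longlonglongrightarrow> t"
    by (rule tendsto_sandwich[rotated 2, OF _ tendsto_const])
      (use kl in \<open>auto intro: always_eventually less_imp_le\<close>)
  then show ?thesis using kl(2) by (intro exI[of _ "\<lambda>n. fst (kl n)"] exI[of _ "\<lambda>n. snd (kl n)"]) simp
qed

lemma phase_seq_above: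
  "\<exists>ks ls. (\<forall>n::nat. t < phase (ks n) (ls n)) \<and> (\<lambda>n. phase (ks n) (ls n)) \<longlonglongrightarrow> t"
proof -
  obtain ks ls where "\<forall>n::nat. phase (ks n) (ls n) < - t" "(\<lambda>n. phase (ks n) (ls n)) \<longlonglongrightarrow> - t"
    using phase_seq_below by blast
  then have "\<forall>n::nat. t < phase (- ks n) (- ls n)" "(\<lambda>n. phase (- ks n) (- ls n)) \<longlonglongrightarrow> t"
    using tendsto_minus[of _ "- t"] by (auto simp: phase_minus less_minus_iff)
  then show ?thesis by (intro exI[of _ "\<lambda>n. - ks n"] exI[of _ "\<lambda>n. - ls n"]) simp
qed

subsection \<open>The envelopes of the orbit\<close>

definition lower :: "real \<Rightarrow> 'd config" where
  "lower t = (\<lambda>i. Sup {orb k l i | k l. phase k l < t})"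

definition upper :: "real \<Rightarrow> 'd config" where
  "upper t = (\<lambda>i. Inf {orb k l i | k l. t < phase k l})"

lemma lower_set_ne: "{orb k l i | k l. phase k l < t} \<noteq> {}"
proof -
  have "phase 0 (\<lfloor>t\<rfloor> - 1) < t" by (simp add: phase_def) linarith
  then show ?thesis by blast
qed

lemma upper_set_ne: "{orb k l i | k l. t < phase k l} \<noteq> {}"
proof -
  have "t < phase 0 (\<lceil>t\<rceil> + 1)" by (simp add: phase_def) linarith
  then show ?thesis by blast
qed

lemma lower_set_bdd: "bdd_above {orb k l i | k l. phase k l < t}"
proof (rule bdd_aboveI)
  fix y assume "y \<in> {orb k l i | k l. phase k l < t}"
  then obtain k l where "y = orb k l i" "phase k l < t" by blast
  then show "y \<le> x i + t + 1" using orb_bound[of k l i] by (simp add: abs_le_iff)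
qed

lemma upper_set_bdd: "bdd_below {orb k l i | k l. t < phase k l}"
proof (rule bdd_belowI)
  fix y assume "y \<in> {orb k l i | k l. t < phase k l}"
  then obtain k l where "y = orb k l i" "t < phase k l" by blast
  then show "x i + t - 1 \<le> y" using orb_bound[of k l i] by (simp add: abs_le_iff)
qed

lemma orb_le_lower: "phase k l < t \<Longrightarrow> orb k l \<le> lower t"
  unfolding le_fun_def lower_def by (auto intro!: cSup_upper lower_set_bdd)

lemma upper_le_orb: "t < phase k l \<Longrightarrow> upper t \<le> orb k l"
  unfolding le_fun_def upper_def by (auto intro!: cInf_lower upper_set_bdd)

lemma lower_le_iff: "lower t \<le> w \<longleftrightarrow> (\<forall>k l. phase k l < t \<longrightarrow> orb k l \<le> w)"
proof
  assume "\<forall>k l. phase k l < t \<longrightarrow> orb k l \<le> w"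
  then show "lower t \<le> w"
    unfolding le_fun_def lower_def by (auto intro!: cSup_least lower_set_ne)
qed (use orb_le_lower order_trans in blast)

lemma le_upper_iff: "w \<le> upper t \<longleftrightarrow> (\<forall>k l. t < phase k l \<longrightarrow> w \<le> orb k l)"
proof
  assume "\<forall>k l. t < phase k l \<longrightarrow> w \<le> orb k l"
  then show "w \<le> upper t"
    unfolding le_fun_def upper_def by (auto intro!: cInf_greatest upper_set_ne)
qed (use upper_le_orb order_trans in blast)

lemma lower_le_orb: "t \<le> phase k l \<Longrightarrow> lower t \<le> orb k l"
  by (simp add: lower_le_iff orb_mono)

lemma orb_le_upper: "phase k l \<le> t \<Longrightarrow> orb k l \<le> upper t"
  by (simp add: le_upper_iff orb_mono)

lemma lower_le_upper: "lower t \<le> upper t"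
  by (simp add: lower_le_iff orb_le_upper)

lemma lower_mono: "s \<le> t \<Longrightarrow> lower s \<le> lower t"
  by (simp add: lower_le_iff orb_le_lower)

lemma upper_mono: "s \<le> t \<Longrightarrow> upper s \<le> upper t"
  by (simp add: le_upper_iff upper_le_orb)

lemma upper_le_lower: "s < t \<Longrightarrow> upper s \<le> lower t"
  using phase_dense[of s t] upper_le_orb orb_le_lower order_trans by metis

lemma lower_approx: "a < lower t i \<Longrightarrow> \<exists>k l. phase k l < t \<and> a < orb k l i"
  by (simp add: lower_def less_cSup_iff[OF lower_set_ne lower_set_bdd]) blast

lemma upper_approx: "upper t i < a \<Longrightarrow> \<exists>k l. t < phase k l \<and> orb k l i < a"
  by (simp add: upper_def cInf_less_iff[OF upper_set_ne upper_set_bdd]) blast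

lemma shifted_orbit_set:
  "{orb k' l' i | k' l'. P (phase k' l')} =
   (\<lambda>y. real_of_int l + y) ` {orb k' l' (i + k) | k' l'. P (phase k' l' + phase k l)}"
proof -
  have shift: "real_of_int l + orb k' l' (i + k) = orb (k' + k) (l' + l) i" for k' l'
    by (simp add: orb_apply algebra_simps)
  show ?thesis
  proof (intro equalityI subsetI)
    fix y assume "y \<in> {orb k' l' i | k' l'. P (phase k' l')}"
    then obtain k' l' where "y = orb k' l' i" "P (phase k' l')" by blast
    moreover have "P (phase (k' - k) (l' - l) + phase k l)"
      using \<open>P (phase k' l')\<close> by (simp add: phase_diff)
    ultimately show "y \<in> (\<lambda>y. real_of_int l + y) ` {orb k' l' (i + k) | k' l'. P (phase k' l' + phase k l)}"
      using shift[of "k' - k" "l' - l"] by (intro rev_image_eqI[of "orb (k' - k) (l' - l) (i + k)"]) auto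
  next
    fix y assume "y \<in> (\<lambda>y. real_of_int l + y) ` {orb k' l' (i + k) | k' l'. P (phase k' l' + phase k l)}"
    then obtain k' l' where "y = real_of_int l + orb k' l' (i + k)" "P (phase k' l' + phase k l)"
      by blast
    then have "y = orb (k' + k) (l' + l) i \<and> P (phase (k' + k) (l' + l))"
      by (simp add: shift phase_add)
    then show "y \<in> {orb k' l' i | k' l'. P (phase k' l')}" by blast
  qed
qed

lemma lower_shift: "tau k l (lower t) = lower (t + phase k l)"
proof
  fix i
  have "lower (t + phase k l) i
      = Sup ((\<lambda>y. real_of_int l + y) ` {orb k' l' (i + k) | k' l'. phase k' l' < t})"
    unfolding lower_def shifted_orbit_set[where P = "\<lambda>p. p < t + phase k l" and k = k and l = l] by simp
  also have "\<dots> = real_of_int l + lower t (i + k)"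
    using Sup_add_eq[where f = "\<lambda>y. y" and A = "{orb k' l' (i + k) | k' l'. phase k' l' < t}"]
      lower_set_bdd[where i = "i + k" and t = t] lower_set_ne[where i = "i + k" and t = t]
    by (simp add: lower_def)
  finally show "tau k l (lower t) i = lower (t + phase k l) i" by (simp add: tau_def)
qed

lemma upper_shift: "tau k l (upper t) = upper (t + phase k l)"
proof
  fix i
  have "upper (t + phase k l) i
      = Inf ((\<lambda>y. real_of_int l + y) ` {orb k' l' (i + k) | k' l'. t < phase k' l'})"
    unfolding upper_def shifted_orbit_set[where P = "\<lambda>p. t + phase k l < p" and k = k and l = l] by simp
  also have "\<dots> = real_of_int l + upper t (i + k)"
    using Inf_add_eq[where f = "\<lambda>y. y" and A = "{orb k' l' (i + k) | k' l'. t < phase k' l'}"]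
      upper_set_bdd[where i = "i + k" and t = t] upper_set_ne[where i = "i + k" and t = t]
    by (simp add: upper_def)
  finally show "tau k l (upper t) i = upper (t + phase k l) i" by (simp add: tau_def)
qed

lemma lower_left_continuous: "(lower \<longlongrightarrow> lower t) (at_left t)"
  unfolding tendsto_fun_iff
proof (intro allI order_tendstoI)
  fix i a assume "lower t i < a"
  show "eventually (\<lambda>s. lower s i < a) (at_left t)"
  proof (rule eventually_at_leftI[of "t - 1"])
    fix s assume "s \<in> {t - 1<..<t}"
    then have "lower s i \<le> lower t i" using lower_mono[of s t] by (simp add: le_fun_def)
    then show "lower s i < a" using \<open>lower t i < a\<close> by simp
  qed simp
next
  fix i a assume "a < lower t i"
  then obtain k l where kl: "phase k l < t" "a < orb k l i" using lower_approx by blast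
  show "eventually (\<lambda>s. a < lower s i) (at_left t)"
  proof (rule eventually_at_leftI[OF _ kl(1)])
    fix s assume "s \<in> {phase k l<..<t}"
    then have "orb k l i \<le> lower s i" using orb_le_lower[of k l s] by (simp add: le_fun_def)
    then show "a < lower s i" using kl(2) by simp
  qed
qed

lemma upper_right_continuous: "(upper \<longlongrightarrow> upper t) (at_right t)"
  unfolding tendsto_fun_iff
proof (intro allI order_tendstoI)
  fix i a assume "a < upper t i"
  show "eventually (\<lambda>s. a < upper s i) (at_right t)"
  proof (rule eventually_at_rightI[of _ "t + 1"])
    fix s assume "s \<in> {t<..<t + 1}"
    then have "upper t i \<le> upper s i" using upper_mono[of t s] by (simp add: le_fun_def)
    then show "a < upper s i" using \<open>a < upper t i\<close> by simp
  qed simp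
next
  fix i a assume "upper t i < a"
  then obtain k l where kl: "t < phase k l" "orb k l i < a" using upper_approx by blast
  show "eventually (\<lambda>s. upper s i < a) (at_right t)"
  proof (rule eventually_at_rightI[OF _ kl(1)])
    fix s assume "s \<in> {t<..<phase k l}"
    then have "upper s i \<le> orb k l i" using upper_le_orb[of s k l] by (simp add: le_fun_def)
    then show "upper s i < a" using kl(2) by simp
  qed
qed

lemma lower_tendsto_from_below:
  "(\<And>n. u n < t) \<Longrightarrow> u \<longlonglongrightarrow> t \<Longrightarrow> (\<lambda>n. lower (u n)) \<longlonglongrightarrow> lower t"
  by (rule filterlim_compose[OF lower_left_continuous tendsto_imp_filterlim_at_left])
    (auto intro: always_eventually)

lemma upper_tendsto_from_above:
  "(\<And>n. t < u n) \<Longrightarrow> u \<longlonglongrightarrow> t \<Longrightarrow> (\<lambda>n. upper (u n)) \<longlonglongrightarrow> upper t"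
  by (rule filterlim_compose[OF upper_right_continuous tendsto_imp_filterlim_at_right])
    (auto intro: always_eventually)

subsection \<open>The hull and its recurrent part\<close>

text \<open>Every point of the hull has the same growth as \<open>x\<close>; hence a translation of
  nonzero phase fixes no point of the hull.\<close>
definition growth_bounded :: "'d config set" where
  "growth_bounded = {w. \<forall>i k. \<bar>w (i + k) - w i - ip \<omega> k\<bar> \<le> 1}"

lemma Mtilde_orb: "Mtilde x = closure {orb k l | k l. True}"
  by (simp add: Mtilde_def orb_def)

lemma closed_Mtilde: "closed (Mtilde x)"
  by (simp add: Mtilde_def)

lemma closed_growth_bounded: "closed growth_bounded"
  unfolding growth_bounded_def
  by (intro closed_Collect_all closed_Collect_le continuous_intros continuous_on_product_coordinates)

lemma Mtilde_growth_bounded: "Mtilde x \<subseteq> growth_bounded"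
  unfolding Mtilde_orb
proof (rule closure_minimal[OF _ closed_growth_bounded], safe)
  fix k l
  have "orb k l (i + k') - orb k l i - ip \<omega> k' = x ((i + k) + k') - x (i + k) - ip \<omega> k'" for i k'
    by (simp add: orb_apply algebra_simps)
  then show "orb k l \<in> growth_bounded" using x_growth by (simp add: growth_bounded_def)
qed

lemma periodic_imp_resonant:
  assumes w: "w \<in> growth_bounded" and fixed: "tau k l w = w"
  shows "phase k l = 0"
proof (rule ccontr)
  assume nonzero: "phase k l \<noteq> 0"
  have bounded: "real n * \<bar>phase k l\<bar> \<le> 1" for n :: nat
  proof -
    have "w (0 + int n *s k) + real n * real_of_int l = w 0"
      using fun_cong[OF tau_iterate_eq[OF fixed, of n], of 0] by (simp add: tau_def)
    moreover have "\<bar>w (0 + int n *s k) - w 0 - ip \<omega> (int n *s k)\<bar> \<le> 1"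
      using w unfolding growth_bounded_def by blast
    ultimately have "real n * phase k l = - (w (0 + int n *s k) - w 0 - ip \<omega> (int n *s k))"
      and "\<bar>w (0 + int n *s k) - w 0 - ip \<omega> (int n *s k)\<bar> \<le> 1"
      by (simp_all add: ip_smult phase_def algebra_simps)
    then show ?thesis by (metis abs_minus_cancel abs_mult abs_of_nat)
  qed
  obtain n :: nat where "1 / \<bar>phase k l\<bar> < real n" using reals_Archimedean2 by blast
  then have "1 < real n * \<bar>phase k l\<bar>" using nonzero by (simp add: field_simps)
  then show False using bounded[of n] by simp
qed

text \<open>The envelopes belong to the hull (as limits of orbit points) and are recurrent
  (as limits of their own translates, by one-sided continuity).\<close>
lemma lower_in_Mtilde: "lower t \<in> Mtilde x"
proof -
  obtain ks ls where below: "\<forall>n. phase (ks n) (ls n) < t"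
    and lim: "(\<lambda>n. phase (ks n) (ls n)) \<longlonglongrightarrow> t"
    using phase_seq_below by blast
  have "(\<lambda>n. orb (ks n) (ls n)) \<longlonglongrightarrow> lower t"
  proof (rule tendsto_fun_sandwich[where f = "\<lambda>n. lower (phase (ks n) (ls n))" and h = "\<lambda>n. lower t"])
    show "lower (phase (ks n) (ls n)) \<le> orb (ks n) (ls n)" for n by (rule lower_le_orb) simp
    show "orb (ks n) (ls n) \<le> lower t" for n using below by (simp add: orb_le_lower)
    show "(\<lambda>n. lower (phase (ks n) (ls n))) \<longlonglongrightarrow> lower t"
      using below lim by (intro lower_tendsto_from_below) auto
  qed simp
  moreover have "\<forall>n. orb (ks n) (ls n) \<in> Mtilde x" by (simp add: orb_in_Mtilde)
  ultimately show ?thesis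
    by (intro Lim_in_closed_set[OF closed_Mtilde always_eventually]) simp_all
qed

lemma upper_in_Mtilde: "upper t \<in> Mtilde x"
proof -
  obtain ks ls where above: "\<forall>n. t < phase (ks n) (ls n)"
    and lim: "(\<lambda>n. phase (ks n) (ls n)) \<longlonglongrightarrow> t"
    using phase_seq_above by blast
  have "(\<lambda>n. orb (ks n) (ls n)) \<longlonglongrightarrow> upper t"
  proof (rule tendsto_fun_sandwich[where f = "\<lambda>n. upper t" and h = "\<lambda>n. upper (phase (ks n) (ls n))"])
    show "orb (ks n) (ls n) \<le> upper (phase (ks n) (ls n))" for n by (rule orb_le_upper) simp
    show "upper t \<le> orb (ks n) (ls n)" for n using above by (simp add: upper_le_orb)
    show "(\<lambda>n. upper (phase (ks n) (ls n))) \<longlonglongrightarrow> upper t"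
      using above lim by (intro upper_tendsto_from_above) auto
  qed simp
  moreover have "\<forall>n. orb (ks n) (ls n) \<in> Mtilde x" by (simp add: orb_in_Mtilde)
  ultimately show ?thesis
    by (intro Lim_in_closed_set[OF closed_Mtilde always_eventually]) simp_all
qed

lemma lower_in_Mrec: "lower t \<in> Mrec \<omega> x"
proof -
  obtain ks ls where below: "\<forall>n. phase (ks n) (ls n) < 0"
    and lim: "(\<lambda>n. phase (ks n) (ls n)) \<longlonglongrightarrow> 0"
    using phase_seq_below by blast
  have "(\<lambda>n. tau (ks n) (ls n) (lower t)) \<longlonglongrightarrow> lower t"
    unfolding lower_shift using below tendsto_add[OF tendsto_const lim, of t]
    by (intro lower_tendsto_from_below) auto
  moreover have "\<forall>n. ip \<omega> (ks n) + real_of_int (ls n) \<noteq> 0"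
    using below by (metis phase_def less_irrefl)
  ultimately show ?thesis unfolding Mrec_def using lower_in_Mtilde by blast
qed

lemma upper_in_Mrec: "upper t \<in> Mrec \<omega> x"
proof -
  obtain ks ls where above: "\<forall>n. 0 < phase (ks n) (ls n)"
    and lim: "(\<lambda>n. phase (ks n) (ls n)) \<longlonglongrightarrow> 0"
    using phase_seq_above by blast
  have "(\<lambda>n. tau (ks n) (ls n) (upper t)) \<longlonglongrightarrow> upper t"
    unfolding upper_shift using above tendsto_add[OF tendsto_const lim, of t]
    by (intro upper_tendsto_from_above) auto
  moreover have "\<forall>n. ip \<omega> (ks n) + real_of_int (ls n) \<noteq> 0"
    using above by (metis phase_def less_irrefl)
  ultimately show ?thesis unfolding Mrec_def using upper_in_Mtilde by blast
qed

definition off_phase :: "real \<Rightarrow> 'd config set" where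
  "off_phase t = {w. w \<le> lower t} \<union> {w. upper t \<le> w}"

lemma closed_off_phase: "closed (off_phase t)"
  unfolding off_phase_def by (intro closed_Un closed_fun_le closed_fun_ge)

lemma orb_off_phase:
  assumes "phase k l \<noteq> t" shows "orb k l \<in> off_phase t"
proof (cases "phase k l < t")
  case True then show ?thesis by (simp add: off_phase_def orb_le_lower)
next
  case False then show ?thesis using assms by (simp add: off_phase_def upper_le_orb)
qed

text \<open>A point of the hull that is not off phase \<open>t\<close> is the (unique) orbit point of
  phase \<open>t\<close>: near it there are no other orbit points.\<close>
lemma hull_point_on_phase:
  assumes hull: "w \<in> Mtilde x" and on: "w \<notin> off_phase t"
  shows "\<exists>k l. phase k l = t \<and> w = orb k l"
proof -
  define P where "P = {orb k l | k l. phase k l = t}"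
  have "closed P"
  proof (cases "P = {}")
    case False
    then obtain k l where kl: "phase k l = t" unfolding P_def by blast
    have "P \<subseteq> {orb k l}"
    proof
      fix y assume "y \<in> P"
      then obtain k' l' where "y = orb k' l'" "phase k' l' = t" unfolding P_def by blast
      then show "y \<in> {orb k l}" using orb_eq[of k' l' k l] kl by simp
    qed
    then have "P = {orb k l}" using False by blast
    then show ?thesis by (simp add: closed_fun_singleton)
  qed simp
  have near: "- off_phase t \<inter> {orb k l | k l. True} \<subseteq> P"
  proof
    fix y assume "y \<in> - off_phase t \<inter> {orb k l | k l. True}"
    then obtain k l where "y = orb k l" "orb k l \<notin> off_phase t" by blast
    then have "y = orb k l" "phase k l = t" using orb_off_phase[of k l t] by auto
    then show "y \<in> P" unfolding P_def by blast
  qed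
  have "w \<in> - off_phase t \<inter> closure {orb k l | k l. True}"
    using hull on by (simp add: Mtilde_orb)
  also have "\<dots> \<subseteq> closure (- off_phase t \<inter> {orb k l | k l. True})"
    by (rule open_Int_closure_subset) (simp add: open_Compl closed_off_phase)
  also have "\<dots> \<subseteq> P"
    using closure_mono[OF near] \<open>closed P\<close> by simp
  finally show ?thesis unfolding P_def by blast
qed

lemma hull_comparable:
  assumes "w \<in> Mtilde x" shows "w \<le> orb k l \<or> orb k l \<le> w"
proof (cases "w \<in> off_phase (phase k l)")
  case True
  then consider "w \<le> lower (phase k l)" | "upper (phase k l) \<le> w"
    unfolding off_phase_def by blast
  then show ?thesis
  proof cases
    case 1 then show ?thesis using order.trans[OF 1 lower_le_orb[OF order_refl]] by simp
  next
    case 2 then show ?thesis using order.trans[OF orb_le_upper[OF order_refl] 2] by simp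
  qed
next
  case False
  then obtain k' l' where "phase k' l' = phase k l" "w = orb k' l'"
    using hull_point_on_phase[OF assms] by blast
  then show ?thesis using orb_eq[of k' l' k l] by simp
qed

text \<open>Every point of the hull is an envelope or an orbit point separated from both envelopes
  of its phase; its phase is the supremum of the phases of the orbit points below it.\<close>
lemma hull_trichotomy:
  assumes hull: "w \<in> Mtilde x"
  shows "\<exists>t. w = lower t \<or> w = upper t \<or> w \<notin> off_phase t"
proof -
  define A where "A = {phase k l | k l. orb k l \<le> w}"
  define l0 where "l0 = \<lfloor>w 0 - x 0\<rfloor> - 2"
  have "w 0 > orb 0 l0 0" by (simp add: orb_apply l0_def) linarith
  then have "\<not> w \<le> orb 0 l0" unfolding le_fun_def by (meson not_le)
  then have "orb 0 l0 \<le> w" using hull_comparable[OF hull] by blast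
  then have A_ne: "A \<noteq> {}" unfolding A_def by blast
  have A_bdd: "bdd_above A"
  proof (rule bdd_aboveI)
    fix p assume "p \<in> A"
    then obtain k l where "p = phase k l" "orb k l \<le> w" unfolding A_def by blast
    then have "p = phase k l" "orb k l 0 \<le> w 0" by (simp_all add: le_fun_def)
    then show "p \<le> w 0 - x 0 + 1" using orb_bound[of k l 0] by (simp add: abs_le_iff)
  qed
  define t where "t = Sup A"
  have "lower t \<le> w" unfolding lower_le_iff
  proof (intro allI impI)
    fix k l assume "phase k l < t"
    then obtain p where "p \<in> A" "phase k l < p"
      using less_cSup_iff[OF A_ne A_bdd] unfolding t_def by blast
    then obtain k' l' where "phase k l < phase k' l'" "orb k' l' \<le> w" unfolding A_def by blast
    then show "orb k l \<le> w" using orb_mono[of k l k' l'] by simp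
  qed
  moreover have "w \<le> upper t" unfolding le_upper_iff
  proof (intro allI impI)
    fix k l assume "t < phase k l"
    then have "phase k l \<notin> A" using cSup_upper[OF _ A_bdd] unfolding t_def by (meson not_le)
    then have "\<not> orb k l \<le> w" unfolding A_def by blast
    then show "w \<le> orb k l" using hull_comparable[OF hull] by blast
  qed
  ultimately have "w \<in> off_phase t \<Longrightarrow> w = lower t \<or> w = upper t"
    unfolding off_phase_def using order_antisym by blast
  then show ?thesis by blast
qed

subsection \<open>The recurrent set consists of the envelopes\<close>

definition envelopes :: "'d config set" where
  "envelopes = range lower \<union> range upper"

lemma envelopes_Mtilde: "envelopes \<subseteq> Mtilde x"
  unfolding envelopes_def using lower_in_Mtilde upper_in_Mtilde by blast

lemma envelopes_shift: "w \<in> envelopes \<Longrightarrow> tau k l w \<in> envelopes"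
  unfolding envelopes_def by (auto simp: lower_shift upper_shift)

lemma envelopes_off_phase:
  assumes "w \<in> envelopes" shows "w \<in> off_phase t"
proof -
  consider s where "w = lower s" | s where "w = upper s"
    using assms unfolding envelopes_def by blast
  then show ?thesis
  proof cases
    case (1 s)
    then show ?thesis unfolding off_phase_def
      using lower_mono[of s t] upper_le_lower[of t s] by (cases "s \<le> t") auto
  next
    case (2 s)
    then show ?thesis unfolding off_phase_def
      using upper_le_lower[of s t] upper_mono[of t s] by (cases "s < t") auto
  qed
qed

text \<open>A recurrent point which is not an envelope would be an orbit point of some phase \<open>t\<close>
  outside the closed set \<open>off_phase t\<close>, although all its nontrivial translates lie in it.\<close>
lemma Mrec_eq_envelopes: "Mrec \<omega> x = envelopes"
proof
  show "envelopes \<subseteq> Mrec \<omega> x"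
    unfolding envelopes_def using lower_in_Mrec upper_in_Mrec by blast
next
  show "Mrec \<omega> x \<subseteq> envelopes"
  proof
    fix w assume "w \<in> Mrec \<omega> x"
    then obtain ks ls where hull: "w \<in> Mtilde x"
      and nonresonant: "\<forall>n. ip \<omega> (ks n) + real_of_int (ls n) \<noteq> 0"
      and recurrent: "(\<lambda>n. tau (ks n) (ls n) w) \<longlonglongrightarrow> w"
      unfolding Mrec_def by blast
    obtain t where t: "w = lower t \<or> w = upper t \<or> w \<notin> off_phase t"
      using hull_trichotomy[OF hull] by blast
    have "w \<in> off_phase t" if off: "w \<notin> off_phase t"
    proof -
      obtain k l where kl: "phase k l = t" "w = orb k l"
        using hull_point_on_phase[OF hull off] by blast
      have "tau (ks n) (ls n) w \<in> off_phase t" for n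
      proof -
        have "phase (ks n + k) (ls n + l) \<noteq> t"
          using nonresonant kl(1) by (simp add: phase_add) (simp add: phase_def)
        then show ?thesis using orb_off_phase kl(2) by (simp add: tau_orb)
      qed
      then show ?thesis
        by (intro Lim_in_closed_set[OF closed_off_phase always_eventually _ recurrent]) simp_all
    qed
    then show "w \<in> envelopes" using t unfolding envelopes_def by blast
  qed
qed

section \<open>The dichotomy\<close>

text \<open>The same separation argument shows that the set of envelopes is closed.\<close>
lemma closed_envelopes: "closed envelopes"
  unfolding closure_subset_eq[symmetric]
proof
  fix w assume w: "w \<in> closure envelopes"
  then have "w \<in> Mtilde x"
    using closure_minimal[OF envelopes_Mtilde closed_Mtilde] by blast
  then obtain t where "w = lower t \<or> w = upper t \<or> w \<notin> off_phase t"
    using hull_trichotomy by blast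
  moreover have "w \<in> off_phase t"
    using w closure_minimal[OF _ closed_off_phase] envelopes_off_phase by blast
  ultimately show "w \<in> envelopes" unfolding envelopes_def by blast
qed

text \<open>An envelope is the limit of its translates of nonzero phase, which are other envelopes.\<close>
lemma perfect_envelopes: "perfect_set envelopes"
  unfolding perfect_set_def
proof
  fix w assume "w \<in> envelopes"
  then obtain ks ls where hull: "w \<in> Mtilde x"
    and nonresonant: "\<forall>n. ip \<omega> (ks n) + real_of_int (ls n) \<noteq> 0"
    and recurrent: "(\<lambda>n. tau (ks n) (ls n) w) \<longlonglongrightarrow> w"
    unfolding Mrec_eq_envelopes[symmetric] Mrec_def by blast
  show "w islimpt envelopes"
  proof (rule limpt_of_sequence[OF recurrent])
    show "tau (ks n) (ls n) w \<in> envelopes" for n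
      using \<open>w \<in> envelopes\<close> by (rule envelopes_shift)
    show "tau (ks n) (ls n) w \<noteq> w" for n
      using periodic_imp_resonant[of w "ks n" "ls n"] hull Mtilde_growth_bounded nonresonant
      by (auto simp: phase_def)
  qed
qed

text \<open>Translation moves a gap \<open>lower t \<noteq> upper t\<close> by any phase; so gaps are dense once one
  exists.\<close>
lemma gaps_dense:
  assumes gap: "lower t0 \<noteq> upper t0" and "a < b"
  shows "\<exists>t. a < t \<and> t < b \<and> lower t \<noteq> upper t"
proof -
  obtain k l where kl: "a - t0 < phase k l" "phase k l < b - t0"
    using phase_dense[of "a - t0" "b - t0"] \<open>a < b\<close> by auto
  have "tau k l (lower t0) \<noteq> tau k l (upper t0)" using gap tau_inj by blast
  then have "lower (t0 + phase k l) \<noteq> upper (t0 + phase k l)"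
    by (simp add: lower_shift upper_shift)
  then show ?thesis using kl by (intro exI[of _ "t0 + phase k l"]) auto
qed

lemma gap_between:
  assumes gap: "lower t0 \<noteq> upper t0"
    and y: "y \<in> envelopes" and z: "z \<in> envelopes" and yz: "y i < z i"
  shows "\<exists>t. lower t \<noteq> upper t \<and> y \<le> lower t \<and> upper t \<le> z"
proof -
  obtain s where ys: "y = lower s \<or> y = upper s" using y unfolding envelopes_def by blast
  obtain s' where zs: "z = lower s' \<or> z = upper s'" using z unfolding envelopes_def by blast
  have y_bounds: "lower s \<le> y" "y \<le> upper s" using ys lower_le_upper[of s] by auto
  have z_bounds: "lower s' \<le> z" "z \<le> upper s'" using zs lower_le_upper[of s'] by auto
  have not_zy: "\<not> z \<le> y" using yz by (auto simp: le_fun_def not_le)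
  consider "s < s'" | "s' < s" | "s = s'" by linarith
  then show ?thesis
  proof cases
    case 1
    then obtain t where t: "s < t" "t < s'" "lower t \<noteq> upper t"
      using gaps_dense[OF gap] by blast
    have "y \<le> lower t" using y_bounds(2) upper_le_lower[OF t(1)] by (rule order.trans)
    moreover have "upper t \<le> z" using upper_le_lower[OF t(2)] z_bounds(1) by (rule order.trans)
    ultimately show ?thesis using t(3) by blast
  next
    case 2
    then have "z \<le> y"
      using z_bounds(2) upper_le_lower[OF 2] y_bounds(1) by (blast intro: order.trans)
    then show ?thesis using not_zy by blast
  next
    case 3
    have "y = lower s" using ys z_bounds(2) not_zy 3 by auto
    moreover have "z = upper s" using zs y_bounds(1) not_zy 3 \<open>y = lower s\<close> by auto
    ultimately show ?thesis using not_zy by (intro exI[of _ s]) auto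
  qed
qed

lemma totally_disconnected_envelopes:
  assumes gap: "lower t0 \<noteq> upper t0"
  shows "totally_disconnected_set envelopes"
  unfolding totally_disconnected_set_def
proof (intro allI impI)
  fix C assume C: "C \<subseteq> envelopes" "connected C"
  have separated: False if yC: "y \<in> C" and zC: "z \<in> C" and yz: "y i < z i" for y z i
  proof -
    have "y \<in> envelopes" "z \<in> envelopes" using yC zC C(1) by blast+
    then obtain t where t: "lower t \<noteq> upper t" "y \<le> lower t" "upper t \<le> z"
      using gap_between[where y = y and z = z and i = i, OF gap _ _ yz] by blast
    have "C \<subseteq> {w. w \<le> lower t} \<union> {w. upper t \<le> w}"
      using C(1) envelopes_off_phase unfolding off_phase_def by blast
    moreover have "{w. w \<le> lower t} \<inter> {w. upper t \<le> w} \<inter> C = {}"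
    proof (rule ccontr)
      assume "{w. w \<le> lower t} \<inter> {w. upper t \<le> w} \<inter> C \<noteq> {}"
      then obtain w where "upper t \<le> w" "w \<le> lower t" by blast
      then have "upper t \<le> lower t" by (rule order.trans)
      then show False using order_antisym[OF lower_le_upper] t(1) by blast
    qed
    ultimately have "{w. w \<le> lower t} \<inter> C = {} \<or> {w. upper t \<le> w} \<inter> C = {}"
      using connected_closedD[OF C(2)] closed_fun_le closed_fun_ge by blast
    then show False using yC zC t(2,3) by blast
  qed
  have "y = z" if "y \<in> C" "z \<in> C" for y z
  proof
    fix i show "y i = z i"
      using separated[OF that] separated[OF that(2,1)] by (meson linorder_neqE)
  qed
  then show "\<exists>a. C \<subseteq> {a}" by blast
qed

text \<open>Without gaps, \<open>lower = upper\<close> is continuous, being left and right continuous.\<close>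
lemma connected_without_gaps:
  assumes no_gap: "\<forall>t. lower t = upper t"
  shows "connected envelopes"
proof -
  have "continuous_on UNIV lower"
  proof (rule continuous_on_coordinatewise_then_product)
    fix i
    have "isCont (\<lambda>s. lower s i) t" for t
    proof -
      have "((\<lambda>s. lower s i) \<longlongrightarrow> lower t i) (at_left t)"
        using lower_left_continuous by (simp add: tendsto_fun_iff)
      moreover have "((\<lambda>s. lower s i) \<longlongrightarrow> lower t i) (at_right t)"
        using upper_right_continuous no_gap by (simp add: tendsto_fun_iff)
      ultimately show ?thesis by (simp add: isCont_def filterlim_at_split)
    qed
    then show "continuous_on UNIV (\<lambda>s. lower s i)" by (simp add: continuous_at_imp_continuous_on)
  qed
  then have "connected (range lower)" by (rule connected_continuous_image) simp
  moreover have "envelopes = range lower" using no_gap unfolding envelopes_def by auto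
  ultimately show ?thesis by simp
qed

lemma dichotomy: "connected (Mrec \<omega> x) \<or> cantor_set (Mrec \<omega> x)"
  unfolding Mrec_eq_envelopes cantor_set_def
  using connected_without_gaps closed_envelopes perfect_envelopes totally_disconnected_envelopes
  by blast

end

theorem mainTheorem9:
  fixes r :: real and S :: "'d::finite site \<Rightarrow> 'd config \<Rightarrow> real"
    and \<omega> :: "real ^ 'd" and x :: "'d config"
  assumes "local_potentials r S"
    and "\<exists>a. \<omega> $ a \<notin> \<rat>"
    and "global_minimizer r S x"
    and "birkhoff x"
    and "has_rotation_vector x \<omega>"
    and "\<forall>k l. ip \<omega> k + real_of_int l = 0 \<longrightarrow> tau k l x = x"
  shows "connected (Mrec \<omega> x) \<or> cantor_set (Mrec \<omega> x)"
proof -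
  interpret birkhoff_irrational \<omega> x
    using assms(2,4,5,6) by unfold_locales
  show ?thesis by (rule dichotomy)
qed

end
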